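(* Let $a\in\mathbb{C}^*$, $s,t\ge0$ with $n=s+t\ge1$, and $A=\mathrm{diag}(a,\dots,a,-a,\dots,-a)$ with $s$ entries $a$ and $t$ entries $-a$. Then for every $B\in M_n(\mathbb{C})$ with $AB+BA=0$: (1) $\mathrm{rank}(B)\le2\min(s,t)$; (2) $(A,B)\in\mathscr{Z}_{\min(s,t),\,|s-t|,\,0}$.
   Context: For $(p,m,r)\in\mathbb{Z}_{\ge0}^3$ with $2p+m+r=n$, $\mathscr{Z}_{p,m,r}$ denotes the Zariski closure, in $\mathscr{Z}_n=\{(A,B)\in M_n(\mathbb{C})^2 : AB+BA=0\}$, of the union of the $GL_n$-orbits (simultaneous conjugation) of all pairs $(A,B)\in\mathscr{Z}_n$ with $A=\mathrm{diag}(a_1,-a_1,\dots,a_p,-a_p,a_{p+1},\dots,a_{p+m},0,\dots,0)$ ($r$ zeros), $a_i\in\mathbb{C}^*$, $a_i\ne\pm a_j$ for $i\ne j$. *)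

theory Defs
  imports "Jordan_Normal_Form.DL_Rank"
begin

definition anticomm_var :: "nat \<Rightarrow> (complex mat \<times> complex mat) set" where
  "anticomm_var n = {(A,B). A \<in> carrier_mat n n \<and> B \<in> carrier_mat n n \<and>
                          A * B + B * A = 0\<^sub>m n n}"

inductive_set poly_fun :: "nat \<Rightarrow> (complex mat \<times> complex mat \<Rightarrow> complex) set"
  for n :: nat where
  pf_const: "(\<lambda>_. c) \<in> poly_fun n"
| pf_left:  "i < n \<Longrightarrow> j < n \<Longrightarrow> (\<lambda>(A,B). A $$ (i,j)) \<in> poly_fun n"
| pf_right: "i < n \<Longrightarrow> j < n \<Longrightarrow> (\<lambda>(A,B). B $$ (i,j)) \<in> poly_fun n"
| pf_add: "f \<in> poly_fun n \<Longrightarrow> g \<in> poly_fun n \<Longrightarrow> (\<lambda>x. f x + g x) \<in> poly_fun n"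
| pf_mult: "f \<in> poly_fun n \<Longrightarrow> g \<in> poly_fun n \<Longrightarrow> (\<lambda>x. f x * g x) \<in> poly_fun n"

definition zariski_closure_in :: "nat \<Rightarrow> (complex mat \<times> complex mat) set \<Rightarrow> (complex mat \<times> complex mat) set" where
  "zariski_closure_in n S = {x \<in> anticomm_var n.
      \<forall>f \<in> poly_fun n. (\<forall>y \<in> S. f y = 0) \<longrightarrow> f x = 0}"

definition gl_orbit :: "nat \<Rightarrow> complex mat \<times> complex mat \<Rightarrow> (complex mat \<times> complex mat) set" where
  "gl_orbit n X = {(P * fst X * Q, P * snd X * Q) | P Q.
      P \<in> carrier_mat n n \<and> Q \<in> carrier_mat n n \<and> P * Q = 1\<^sub>m n \<and> Q * P = 1\<^sub>m n}"

text \<open>The diagonal matrix diag(a_1,-a_1,...,a_p,-a_p,a_{p+1},...,a_{p+m},0,...,0),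
  with a indexed from 0 (a 0 = a_1, ...).\<close>
definition gen_diag :: "nat \<Rightarrow> nat \<Rightarrow> nat \<Rightarrow> (nat \<Rightarrow> complex) \<Rightarrow> complex mat" where
  "gen_diag p m r a = mat (2*p+m+r) (2*p+m+r) (\<lambda>(i,j).
     if i \<noteq> j then 0
     else if i < 2*p then (if even i then a (i div 2) else - a (i div 2))
     else if i < 2*p+m then a (i - p)
     else 0)"

definition generic_params :: "nat \<Rightarrow> nat \<Rightarrow> (nat \<Rightarrow> complex) \<Rightarrow> bool" where
  "generic_params p m a \<longleftrightarrow> (\<forall>i < p+m. a i \<noteq> 0) \<and>
     (\<forall>i < p+m. \<forall>j < p+m. i \<noteq> j \<longrightarrow> a i \<noteq> a j \<and> a i \<noteq> - a j)"

definition Zpmr :: "nat \<Rightarrow> nat \<Rightarrow> nat \<Rightarrow> (complex mat \<times> complex mat) set" where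
  "Zpmr p m r = (let n = 2*p+m+r in
     zariski_closure_in n (\<Union> {gl_orbit n (gen_diag p m r a, B) | a B.
        generic_params p m a \<and> (gen_diag p m r a, B) \<in> anticomm_var n}))"

end

theory Submission
  imports Defs "Jordan_Normal_Form.Jordan_Normal_Form_Existence"
begin

text \<open>
  Anticommuting with \<open>A\<close> forces \<open>B\<close> to be block
  off-diagonal, \<open>B = [[0, X], [Y, 0]]\<close>, and the rank bound follows at once.

  For the second claim consider the property ``\<open>(A, [[0, X], [Y, 0]])\<close> lies in
  \<open>Z\<^bsub>p,m,0\<^esub>\<close>'' of pairs \<open>(X, Y)\<close>. It is invariant under
  \<open>(X, Y) \<mapsto> (G\<^sub>1 X G\<^sub>2\<^sup>-\<^sup>1, G\<^sub>2 Y G\<^sub>1\<^sup>-\<^sup>1)\<close>, because block-diagonal conjugation fixes \<open>A\<close>,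
  and it passes to the limit along affine lines, because a polynomial that vanishes at
  infinitely many points of a line vanishes on all of it. It holds for pairs of rectangular
  diagonal matrices: moving \<open>A\<close> along the line \<open>A + z diag(1, \<dots>, s, -1, \<dots>, -t)\<close> gives, for
  all but finitely many \<open>z\<close>, a permuted generic diagonal that still anticommutes with \<open>B\<close>.
  Finally every pair is reached from diagonal ones by these two operations: for generic
  \<open>z\<close> the top block of \<open>X + z [I; 0]\<close> is invertible, which moves \<open>X\<close> to \<open>[I; 0]\<close>;
  then \<open>Y = [Y\<^sub>1, Y\<^sub>2]\<close> with \<open>Y\<^sub>1\<close> invertible is moved to \<open>[Y\<^sub>1, 0]\<close>; \<open>Y\<^sub>1\<close> may be
  conjugated to an upper triangular matrix, whose diagonal becomes pairwise distinct
  after a generic perturbation, so that it is diagonalisable.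
\<close>

section \<open>Conjugation by invertible matrices\<close>

definition inverse_mats :: "nat \<Rightarrow> 'a :: semiring_1 mat \<Rightarrow> 'a mat \<Rightarrow> bool" where
  "inverse_mats n P Q \<longleftrightarrow> P \<in> carrier_mat n n \<and> Q \<in> carrier_mat n n \<and> P * Q = 1\<^sub>m n \<and> Q * P = 1\<^sub>m n"

lemma inverse_mats_one: "inverse_mats n (1\<^sub>m n) (1\<^sub>m n)"
  unfolding inverse_mats_def by simp

lemma inverse_mats_sym: "inverse_mats n P Q \<Longrightarrow> inverse_mats n Q P"
  unfolding inverse_mats_def by auto

lemma inverse_mats_mult:
  assumes "inverse_mats n P Q" "inverse_mats n P' Q'"
  shows "inverse_mats n (P * P') (Q' * Q)"
proof -
  have c: "P \<in> carrier_mat n n" "Q \<in> carrier_mat n n" "P' \<in> carrier_mat n n" "Q' \<in> carrier_mat n n"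
    using assms unfolding inverse_mats_def by auto
  have "P * P' * (Q' * Q) = P * (P' * Q') * Q"
    using c by (simp add: assoc_mult_mat[of _ n n _ n _ n])
  moreover have "Q' * Q * (P * P') = Q' * (Q * P) * P'"
    using c by (simp add: assoc_mult_mat[of _ n n _ n _ n])
  ultimately show ?thesis using assms c unfolding inverse_mats_def by auto
qed

lemma inverse_mats_det:
  fixes P :: "'a :: field mat"
  assumes "P \<in> carrier_mat n n" "det P \<noteq> 0"
  obtains Q where "inverse_mats n P Q"
proof -
  have "P \<in> Units (ring_mat TYPE('a) n ())" by (rule det_non_zero_imp_unit[OF assms])
  thus ?thesis using that unfolding Units_def inverse_mats_def by (auto simp: ring_mat_simps)
qed

lemma conj_mult_conj:
  assumes "inverse_mats n P Q" "A \<in> carrier_mat n n" "B \<in> carrier_mat n n"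
  shows "(P * A * Q) * (P * B * Q) = P * (A * B) * Q"
proof -
  have c: "P \<in> carrier_mat n n" "Q \<in> carrier_mat n n" "Q * P = 1\<^sub>m n"
    using assms(1) unfolding inverse_mats_def by auto
  have "Q * (P * (B * Q)) = B * Q"
    using c assms(3) by (simp add: assoc_mult_mat[of Q n n P n "B * Q" n, symmetric])
  moreover have "(P * A * Q) * (P * B * Q) = P * (A * (Q * (P * (B * Q))))"
    using c assms(2,3) by (simp add: assoc_mult_mat[of _ n n _ n _ n])
  ultimately show ?thesis using c assms(2,3) by (simp add: assoc_mult_mat[of _ n n _ n _ n])
qed

lemma conj_cancel:
  assumes "inverse_mats n P Q" "M \<in> carrier_mat n n"
  shows "Q * (P * M * Q) * P = M"
proof -
  have c: "P \<in> carrier_mat n n" "Q \<in> carrier_mat n n" "Q * P = 1\<^sub>m n"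
    using assms(1) unfolding inverse_mats_def by auto
  have "Q * (P * M * Q) * P = (Q * P) * M * (Q * P)"
    using c(1,2) assms(2) by (simp add: assoc_mult_mat[of _ n n _ n _ n])
  also have "\<dots> = M" by (simp only: c(3) left_mult_one_mat[OF assms(2)] right_mult_one_mat[OF assms(2)])
  finally show ?thesis .
qed

lemma anticomm_var_conj:
  assumes "inverse_mats n P Q" "(A, B) \<in> anticomm_var n"
  shows "(P * A * Q, P * B * Q) \<in> anticomm_var n"
proof -
  have c: "P \<in> carrier_mat n n" "Q \<in> carrier_mat n n" "A \<in> carrier_mat n n" "B \<in> carrier_mat n n"
    and AB: "A * B + B * A = 0\<^sub>m n n"
    using assms unfolding inverse_mats_def anticomm_var_def by auto
  have "(P * A * Q) * (P * B * Q) + (P * B * Q) * (P * A * Q) = P * (A * B) * Q + P * (B * A) * Q"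
    using c by (simp only: conj_mult_conj[OF assms(1)])
  also have "\<dots> = P * (A * B + B * A) * Q"
    using c by (simp add: mult_add_distrib_mat[of P n n "A * B" n "B * A"]
        add_mult_distrib_mat[of "P * (A * B)" n n "P * (B * A)" Q n])
  also have "\<dots> = 0\<^sub>m n n" using AB c by simp
  finally show ?thesis using c unfolding anticomm_var_def by auto
qed

lemma gl_orbit_conj:
  assumes "y \<in> gl_orbit n X" "inverse_mats n P Q" "fst X \<in> carrier_mat n n" "snd X \<in> carrier_mat n n"
  shows "(P * fst y * Q, P * snd y * Q) \<in> gl_orbit n X"
proof -
  obtain P0 Q0 where PQ0: "inverse_mats n P0 Q0" and y: "y = (P0 * fst X * Q0, P0 * snd X * Q0)"
    using assms(1) unfolding gl_orbit_def inverse_mats_def by auto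
  have c: "P \<in> carrier_mat n n" "Q \<in> carrier_mat n n" "P0 \<in> carrier_mat n n" "Q0 \<in> carrier_mat n n"
    using assms(2) PQ0 unfolding inverse_mats_def by auto
  have "P * (P0 * M * Q0) * Q = (P * P0) * M * (Q0 * Q)" if "M \<in> carrier_mat n n" for M
    using c that by (simp add: assoc_mult_mat[of _ n n _ n _ n])
  then have "(P * fst y * Q, P * snd y * Q) = ((P * P0) * fst X * (Q0 * Q), (P * P0) * snd X * (Q0 * Q))"
    using y assms(3,4) by simp
  with inverse_mats_mult[OF assms(2) PQ0] show ?thesis
    unfolding gl_orbit_def inverse_mats_def
    by (intro CollectI exI[of _ "P * P0"] exI[of _ "Q0 * Q"]) simp
qed

section \<open>Polynomial functions and the Zariski closure\<close>

lemma poly_fun_sum: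
  assumes "finite K" "\<And>k. k \<in> K \<Longrightarrow> g k \<in> poly_fun n"
  shows "(\<lambda>x. \<Sum>k\<in>K. g k x) \<in> poly_fun n"
  using assms by (induction K rule: finite_induct) (auto intro: poly_fun.intros)

lemma poly_fun_subst:
  assumes "f \<in> poly_fun n"
    and "\<And>i j. i < n \<Longrightarrow> j < n \<Longrightarrow> \<exists>g \<in> poly_fun n. \<forall>x \<in> D. fst (\<phi> x) $$ (i,j) = g x"
    and "\<And>i j. i < n \<Longrightarrow> j < n \<Longrightarrow> \<exists>g \<in> poly_fun n. \<forall>x \<in> D. snd (\<phi> x) $$ (i,j) = g x"
  shows "\<exists>h \<in> poly_fun n. \<forall>x \<in> D. f (\<phi> x) = h x"
  using assms(1)
proof (induction rule: poly_fun.induct)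
  case (pf_const c)
  show ?case by (auto intro: poly_fun.pf_const)
next
  case (pf_left i j)
  then show ?case using assms(2) by (simp add: case_prod_beta)
next
  case (pf_right i j)
  then show ?case using assms(3) by (simp add: case_prod_beta)
next
  case (pf_add f g)
  then obtain hf hg where "hf \<in> poly_fun n" "hg \<in> poly_fun n"
    "\<forall>x \<in> D. f (\<phi> x) = hf x" "\<forall>x \<in> D. g (\<phi> x) = hg x" by blast
  then show ?case by (intro bexI[of _ "\<lambda>x. hf x + hg x"]) (auto intro: poly_fun.pf_add)
next
  case (pf_mult f g)
  then obtain hf hg where "hf \<in> poly_fun n" "hg \<in> poly_fun n"
    "\<forall>x \<in> D. f (\<phi> x) = hf x" "\<forall>x \<in> D. g (\<phi> x) = hg x" by blast
  then show ?case by (intro bexI[of _ "\<lambda>x. hf x * hg x"]) (auto intro: poly_fun.pf_mult)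
qed

lemma index_conj_mat:
  assumes "P \<in> carrier_mat n n" "A \<in> carrier_mat n n" "Q \<in> carrier_mat n n" "i < n" "j < n"
  shows "(P * A * Q) $$ (i,j) = (\<Sum>l<n. \<Sum>k<n. P $$ (i,k) * A $$ (k,l) * Q $$ (l,j))"
proof -
  have "(P * A * Q) $$ (i,j) = (\<Sum>k<n. P $$ (i,k) * (\<Sum>l<n. A $$ (k,l) * Q $$ (l,j)))"
    using assms by (simp add: scalar_prod_def atLeast0LessThan)
  also have "\<dots> = (\<Sum>k<n. \<Sum>l<n. P $$ (i,k) * A $$ (k,l) * Q $$ (l,j))"
    by (simp add: sum_distrib_left mult.assoc)
  also have "\<dots> = (\<Sum>l<n. \<Sum>k<n. P $$ (i,k) * A $$ (k,l) * Q $$ (l,j))"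
    by (rule sum.swap)
  finally show ?thesis .
qed

lemma poly_fun_conj:
  assumes "f \<in> poly_fun n" "P \<in> carrier_mat n n" "Q \<in> carrier_mat n n"
  shows "\<exists>h \<in> poly_fun n. \<forall>x \<in> carrier_mat n n \<times> carrier_mat n n.
           f (P * fst x * Q, P * snd x * Q) = h x"
proof (rule poly_fun_subst[OF assms(1)])
  have entry: "(\<lambda>x. \<Sum>l<n. \<Sum>k<n. P $$ (i,k) * M x $$ (k,l) * Q $$ (l,j)) \<in> poly_fun n"
    if "\<And>k l. k < n \<Longrightarrow> l < n \<Longrightarrow> (\<lambda>x. M x $$ (k,l)) \<in> poly_fun n" for i j M
    using that by (intro poly_fun_sum poly_fun.pf_mult poly_fun.pf_const) auto
  have fst_entry: "(\<lambda>x. fst x $$ (k,l)) \<in> poly_fun n" if "k < n" "l < n" for k l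
    using poly_fun.pf_left[OF that] by (simp add: case_prod_unfold)
  have snd_entry: "(\<lambda>x. snd x $$ (k,l)) \<in> poly_fun n" if "k < n" "l < n" for k l
    using poly_fun.pf_right[OF that] by (simp add: case_prod_unfold)
  fix i j assume ij: "i < n" "j < n"
  show "\<exists>g \<in> poly_fun n. \<forall>x \<in> carrier_mat n n \<times> carrier_mat n n.
      fst (P * fst x * Q, P * snd x * Q) $$ (i,j) = g x"
  proof (intro bexI ballI)
    fix x :: "complex mat \<times> complex mat" assume "x \<in> carrier_mat n n \<times> carrier_mat n n"
    then show "fst (P * fst x * Q, P * snd x * Q) $$ (i,j) =
        (\<Sum>l<n. \<Sum>k<n. P $$ (i,k) * fst x $$ (k,l) * Q $$ (l,j))"
      using index_conj_mat[OF assms(2) _ assms(3) ij, of "fst x"] by auto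
  qed (rule entry, rule fst_entry)
  show "\<exists>g \<in> poly_fun n. \<forall>x \<in> carrier_mat n n \<times> carrier_mat n n.
      snd (P * fst x * Q, P * snd x * Q) $$ (i,j) = g x"
  proof (intro bexI ballI)
    fix x :: "complex mat \<times> complex mat" assume "x \<in> carrier_mat n n \<times> carrier_mat n n"
    then show "snd (P * fst x * Q, P * snd x * Q) $$ (i,j) =
        (\<Sum>l<n. \<Sum>k<n. P $$ (i,k) * snd x $$ (k,l) * Q $$ (l,j))"
      using index_conj_mat[OF assms(2) _ assms(3) ij, of "snd x"] by auto
  qed (rule entry, rule snd_entry)
qed

lemma poly_fun_on_line:
  assumes "f \<in> poly_fun n" "A0 \<in> carrier_mat n n" "A1 \<in> carrier_mat n n"
    "B0 \<in> carrier_mat n n" "B1 \<in> carrier_mat n n"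
  obtains p where "\<And>z. f (A0 + z \<cdot>\<^sub>m A1, B0 + z \<cdot>\<^sub>m B1) = poly p z"
proof -
  have "\<exists>p. \<forall>z. f (A0 + z \<cdot>\<^sub>m A1, B0 + z \<cdot>\<^sub>m B1) = poly p z"
    using assms(1)
  proof (induction rule: poly_fun.induct)
    case (pf_const c)
    show ?case by (intro exI[of _ "[:c:]"]) simp
  next
    case (pf_left i j)
    then show ?case using assms by (intro exI[of _ "[:A0 $$ (i,j), A1 $$ (i,j):]"]) auto
  next
    case (pf_right i j)
    then show ?case using assms by (intro exI[of _ "[:B0 $$ (i,j), B1 $$ (i,j):]"]) auto
  next
    case (pf_add f g)
    then obtain p q where "\<forall>z. f (A0 + z \<cdot>\<^sub>m A1, B0 + z \<cdot>\<^sub>m B1) = poly p z"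
      "\<forall>z. g (A0 + z \<cdot>\<^sub>m A1, B0 + z \<cdot>\<^sub>m B1) = poly q z" by blast
    then show ?case by (intro exI[of _ "p + q"]) auto
  next
    case (pf_mult f g)
    then obtain p q where "\<forall>z. f (A0 + z \<cdot>\<^sub>m A1, B0 + z \<cdot>\<^sub>m B1) = poly p z"
      "\<forall>z. g (A0 + z \<cdot>\<^sub>m A1, B0 + z \<cdot>\<^sub>m B1) = poly q z" by blast
    then show ?case by (intro exI[of _ "p * q"]) auto
  qed
  with that show ?thesis by blast
qed

lemma subset_zariski_closure_in: "S \<subseteq> anticomm_var n \<Longrightarrow> S \<subseteq> zariski_closure_in n S"
  unfolding zariski_closure_in_def by auto

lemma zariski_closure_in_line:
  assumes "(A0, B0) \<in> anticomm_var n" "A1 \<in> carrier_mat n n" "B1 \<in> carrier_mat n n"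
    and "\<forall>\<^sub>F z in cofinite. (A0 + z \<cdot>\<^sub>m A1, B0 + z \<cdot>\<^sub>m B1) \<in> zariski_closure_in n S"
  shows "(A0, B0) \<in> zariski_closure_in n S"
  unfolding zariski_closure_in_def
proof (intro CollectI conjI ballI impI)
  show "(A0, B0) \<in> anticomm_var n" by fact
  have A0: "A0 \<in> carrier_mat n n" and B0: "B0 \<in> carrier_mat n n"
    using assms(1) unfolding anticomm_var_def by auto
  fix f assume f: "f \<in> poly_fun n" and vanish: "\<forall>y\<in>S. f y = 0"
  obtain p where p: "\<And>z. f (A0 + z \<cdot>\<^sub>m A1, B0 + z \<cdot>\<^sub>m B1) = poly p z"
    using poly_fun_on_line[OF f A0 assms(2) B0 assms(3)] by blast
  have "\<forall>\<^sub>F z in cofinite. poly p z = 0"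
    using assms(4) by eventually_elim (use f vanish p in \<open>auto simp: zariski_closure_in_def\<close>)
  hence finite_nonroots: "finite {z. poly p z \<noteq> 0}" by (simp add: eventually_cofinite)
  have "p = 0"
  proof (rule ccontr)
    assume "p \<noteq> 0"
    then have "finite ({z. poly p z = 0} \<union> {z. poly p z \<noteq> 0})"
      using poly_roots_finite finite_nonroots by blast
    moreover have "{z. poly p z = 0} \<union> {z. poly p z \<noteq> 0} = (UNIV :: complex set)" by blast
    ultimately show False using infinite_UNIV_char_0 by metis
  qed
  moreover have "A0 + 0 \<cdot>\<^sub>m A1 = A0" "B0 + 0 \<cdot>\<^sub>m B1 = B0"
    using A0 B0 assms(2,3) by (auto intro!: eq_matI)
  ultimately show "f (A0, B0) = 0" using p[of 0] by simp
qed

lemma zariski_closure_in_conj: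
  assumes "x \<in> zariski_closure_in n S" "inverse_mats n P Q"
    and "\<And>A B. (A, B) \<in> S \<Longrightarrow> (P * A * Q, P * B * Q) \<in> S" "S \<subseteq> anticomm_var n"
  shows "(P * fst x * Q, P * snd x * Q) \<in> zariski_closure_in n S"
  unfolding zariski_closure_in_def
proof (intro CollectI conjI ballI impI)
  have PQ: "P \<in> carrier_mat n n" "Q \<in> carrier_mat n n"
    using assms(2) unfolding inverse_mats_def by auto
  have x: "x \<in> anticomm_var n" using assms(1) unfolding zariski_closure_in_def by auto
  then show "(P * fst x * Q, P * snd x * Q) \<in> anticomm_var n"
    using anticomm_var_conj[OF assms(2), of "fst x" "snd x"] by simp
  have carrier: "y \<in> carrier_mat n n \<times> carrier_mat n n" if "y \<in> anticomm_var n" for y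
    using that unfolding anticomm_var_def by auto
  fix f assume f: "f \<in> poly_fun n" and vanish: "\<forall>y\<in>S. f y = 0"
  obtain h where h: "h \<in> poly_fun n"
    and fh: "\<And>y. y \<in> carrier_mat n n \<times> carrier_mat n n \<Longrightarrow> f (P * fst y * Q, P * snd y * Q) = h y"
    using poly_fun_conj[OF f PQ] by blast
  have "h y = 0" if "y \<in> S" for y
  proof -
    obtain A B where y: "y = (A, B)" by force
    then have "h y = f (P * A * Q, P * B * Q)"
      using fh[OF carrier] that assms(4) by auto
    also have "\<dots> = 0" using vanish assms(3) that y by auto
    finally show ?thesis .
  qed
  hence "h x = 0" using assms(1) h unfolding zariski_closure_in_def by auto
  thus "f (P * fst x * Q, P * snd x * Q) = 0" using fh[OF carrier[OF x]] by simp
qed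

section \<open>The generic orbits\<close>

definition generic_orbits :: "nat \<Rightarrow> nat \<Rightarrow> nat \<Rightarrow> (complex mat \<times> complex mat) set" where
  "generic_orbits p m r = (let n = 2*p+m+r in
     \<Union> {gl_orbit n (gen_diag p m r a, B) | a B.
        generic_params p m a \<and> (gen_diag p m r a, B) \<in> anticomm_var n})"

lemma Zpmr_generic_orbits: "Zpmr p m r = zariski_closure_in (2*p+m+r) (generic_orbits p m r)"
  unfolding Zpmr_def generic_orbits_def Let_def ..

lemma gl_orbit_subset_anticomm_var:
  assumes "X \<in> anticomm_var n"
  shows "gl_orbit n X \<subseteq> anticomm_var n"
proof
  fix y assume "y \<in> gl_orbit n X"
  then obtain P Q where "inverse_mats n P Q" "y = (P * fst X * Q, P * snd X * Q)"
    unfolding gl_orbit_def inverse_mats_def by auto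
  then show "y \<in> anticomm_var n" using anticomm_var_conj[of n P Q "fst X" "snd X"] assms by simp
qed

lemma generic_orbits_subset: "generic_orbits p m r \<subseteq> anticomm_var (2*p+m+r)"
  unfolding generic_orbits_def Let_def using gl_orbit_subset_anticomm_var by blast

lemma generic_orbits_conj:
  assumes "(A, B) \<in> generic_orbits p m r" "inverse_mats (2*p+m+r) P Q"
  shows "(P * A * Q, P * B * Q) \<in> generic_orbits p m r"
proof -
  let ?n = "2*p+m+r"
  obtain a B0 where a: "generic_params p m a" and X: "(gen_diag p m r a, B0) \<in> anticomm_var ?n"
    and AB: "(A, B) \<in> gl_orbit ?n (gen_diag p m r a, B0)"
    using assms(1) unfolding generic_orbits_def Let_def by blast
  have "(P * A * Q, P * B * Q) \<in> gl_orbit ?n (gen_diag p m r a, B0)"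
    using gl_orbit_conj[OF AB assms(2)] X unfolding anticomm_var_def by simp
  with a X show ?thesis unfolding generic_orbits_def Let_def by blast
qed

lemma generic_orbits_memI:
  assumes "generic_params p m \<alpha>" "inverse_mats (2*p+m+r) P Q"
    and "A = P * gen_diag p m r \<alpha> * Q" "(A, B) \<in> anticomm_var (2*p+m+r)"
  shows "(A, B) \<in> generic_orbits p m r"
proof -
  let ?n = "2*p+m+r" and ?D = "gen_diag p m r \<alpha>"
  have c: "P \<in> carrier_mat ?n ?n" "Q \<in> carrier_mat ?n ?n" "P * Q = 1\<^sub>m ?n" "Q * P = 1\<^sub>m ?n"
    and B: "B \<in> carrier_mat ?n ?n"
    using assms(2,4) unfolding inverse_mats_def anticomm_var_def by auto
  have D: "?D \<in> carrier_mat ?n ?n" unfolding gen_diag_def by simp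
  have "(Q * A * P, Q * B * P) \<in> anticomm_var ?n"
    using anticomm_var_conj[OF inverse_mats_sym[OF assms(2)] assms(4)] .
  then have DB: "(?D, Q * B * P) \<in> anticomm_var ?n" using conj_cancel[OF assms(2) D] assms(3) by simp
  have "P * (Q * B * P) * Q = B" by (rule conj_cancel[OF inverse_mats_sym[OF assms(2)] B])
  then have "(A, B) \<in> gl_orbit ?n (?D, Q * B * P)"
    using assms(3) c unfolding gl_orbit_def by (intro CollectI exI[of _ P] exI[of _ Q]) simp
  with assms(1) DB show ?thesis unfolding generic_orbits_def Let_def by blast
qed

definition perm_mat :: "nat \<Rightarrow> (nat \<Rightarrow> nat) \<Rightarrow> 'a :: zero_neq_one mat" where
  "perm_mat n \<sigma> = mat n n (\<lambda>(i,j). if i = \<sigma> j then 1 else 0)"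

lemma mult_perm_mat:
  fixes M :: "'a :: semiring_1 mat"
  assumes "M \<in> carrier_mat nr n" "\<And>j. j < n \<Longrightarrow> \<sigma> j < n"
  shows "M * perm_mat n \<sigma> = mat nr n (\<lambda>(i,j). M $$ (i, \<sigma> j))"
proof (rule eq_matI)
  fix i j assume ij: "i < dim_row (mat nr n (\<lambda>(i,j). M $$ (i, \<sigma> j)))"
    "j < dim_col (mat nr n (\<lambda>(i,j). M $$ (i, \<sigma> j)))"
  then have "(M * perm_mat n \<sigma>) $$ (i,j) = (\<Sum>k\<in>{0..<n}. M $$ (i,k) * (if k = \<sigma> j then 1 else 0))"
    using assms(1) by (auto simp: perm_mat_def scalar_prod_def intro!: sum.cong)
  also have "\<dots> = M $$ (i, \<sigma> j)"
    using assms(2)[of j] ij by (subst sum.remove[of _ "\<sigma> j"]) auto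
  finally show "(M * perm_mat n \<sigma>) $$ (i,j) = mat nr n (\<lambda>(i,j). M $$ (i, \<sigma> j)) $$ (i,j)"
    using ij by simp
qed (use assms in \<open>auto simp: perm_mat_def\<close>)

lemma inverse_mats_perm_mat:
  assumes "\<And>k. k < n \<Longrightarrow> \<sigma> k < n \<and> \<tau> (\<sigma> k) = k" "\<And>i. i < n \<Longrightarrow> \<tau> i < n \<and> \<sigma> (\<tau> i) = i"
  shows "inverse_mats n (perm_mat n \<sigma>) (perm_mat n \<tau> :: 'a :: semiring_1 mat)"
proof -
  have c: "perm_mat n \<sigma> \<in> carrier_mat n n" "perm_mat n \<tau> \<in> carrier_mat n n"
    unfolding perm_mat_def by auto
  have "(perm_mat n \<sigma> :: 'a mat) * perm_mat n \<tau> = mat n n (\<lambda>(i,j). perm_mat n \<sigma> $$ (i, \<tau> j))"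
    by (rule mult_perm_mat[OF c(1)]) (use assms in auto)
  also have "\<dots> = 1\<^sub>m n" using assms by (auto simp: perm_mat_def intro!: eq_matI)
  moreover have "(perm_mat n \<tau> :: 'a mat) * perm_mat n \<sigma> = mat n n (\<lambda>(i,j). perm_mat n \<tau> $$ (i, \<sigma> j))"
    by (rule mult_perm_mat[OF c(2)]) (use assms in auto)
  moreover have "\<dots> = 1\<^sub>m n" using assms by (auto simp: perm_mat_def intro!: eq_matI)
  ultimately show ?thesis using c unfolding inverse_mats_def by auto
qed

lemma perm_mat_conj_mat_diag:
  fixes g :: "nat \<Rightarrow> 'a :: semiring_1"
  assumes "\<And>k. k < n \<Longrightarrow> \<sigma> k < n \<and> \<tau> (\<sigma> k) = k" "\<And>i. i < n \<Longrightarrow> \<tau> i < n \<and> \<sigma> (\<tau> i) = i"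
  shows "perm_mat n \<sigma> * mat_diag n g * perm_mat n \<tau> = mat_diag n (\<lambda>i. g (\<tau> i))"
proof -
  have c: "(perm_mat n \<sigma> :: 'a mat) \<in> carrier_mat n n" unfolding perm_mat_def by auto
  have "perm_mat n \<sigma> * mat_diag n g * perm_mat n \<tau> =
      mat n n (\<lambda>(i,j). perm_mat n \<sigma> $$ (i,j) * g j) * perm_mat n \<tau>"
    by (simp only: mat_diag_mult_right[OF c])
  also have "\<dots> = mat n n (\<lambda>(i,j). (perm_mat n \<sigma> :: 'a mat) $$ (i, \<tau> j) * g (\<tau> j))"
    by (subst mult_perm_mat[OF mat_carrier]) (use assms in \<open>auto intro!: eq_matI\<close>)
  also have "\<dots> = mat_diag n (\<lambda>i. g (\<tau> i))"
    using assms by (auto simp: perm_mat_def mat_diag_def intro!: eq_matI)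
  finally show ?thesis .
qed

definition signed_blocks :: "nat \<Rightarrow> (nat \<Rightarrow> complex) \<Rightarrow> nat \<Rightarrow> complex" where
  "signed_blocks s \<beta> i = (if i < s then \<beta> i else - \<beta> (i - s))"

text \<open>
  \<^const>\<open>gen_diag\<close> lists the pairs \<open>\<plusminus>\<beta>\<^sub>k\<close> first; \<open>gen_diag_pos s t k\<close> is the position that its
  \<open>k\<close>-th diagonal entry takes in \<open>diag(\<beta>\<^sub>0, \<dots>, \<beta>\<^sub>s\<^sub>-\<^sub>1, -\<beta>\<^sub>0, \<dots>, -\<beta>\<^sub>t\<^sub>-\<^sub>1)\<close>
  \<open>= mat_diag (s + t) (signed_blocks s \<beta>)\<close>, and \<open>block_pos s t\<close> is the inverse permutation.
\<close>

definition gen_diag_pos :: "nat \<Rightarrow> nat \<Rightarrow> nat \<Rightarrow> nat" where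
  "gen_diag_pos s t k = (let p = min s t in
     if k < 2*p then (if even k then k div 2 else s + k div 2)
     else if k - p < s then k - p else s + (k - p))"

definition block_pos :: "nat \<Rightarrow> nat \<Rightarrow> nat \<Rightarrow> nat" where
  "block_pos s t i = (let p = min s t in
     if i < s then (if i < p then 2*i else i + p)
     else if i - s < p then 2*(i - s) + 1 else i - s + p)"

lemma gen_diag_pos_inverse:
  assumes "k < s + t"
  shows "gen_diag_pos s t k < s + t \<and> block_pos s t (gen_diag_pos s t k) = k"
proof (cases "k < 2 * min s t")
  case True
  then show ?thesis unfolding gen_diag_pos_def block_pos_def Let_def
    by (cases "even k") (auto elim!: evenE oddE simp: min_def split: if_splits)
next
  case False
  then show ?thesis using assms unfolding gen_diag_pos_def block_pos_def Let_def
    by (auto simp: min_def split: if_splits)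
qed

lemma block_pos_inverse:
  assumes "i < s + t"
  shows "block_pos s t i < s + t \<and> gen_diag_pos s t (block_pos s t i) = i"
  using assms unfolding gen_diag_pos_def block_pos_def Let_def by (auto simp: min_def split: if_splits)

lemma gen_diag_signed:
  "gen_diag (min s t) (max s t - min s t) 0 (\<lambda>j. if j < s then \<beta> j else - \<beta> j) =
   mat_diag (s+t) (\<lambda>k. signed_blocks s \<beta> (gen_diag_pos s t k))"
proof -
  let ?p = "min s t" and ?\<alpha> = "\<lambda>j. if j < s then \<beta> j else - \<beta> j"
  have "gen_diag ?p (max s t - ?p) 0 ?\<alpha> = mat_diag (s+t)
      (\<lambda>k. if k < 2*?p then (if even k then ?\<alpha> (k div 2) else - ?\<alpha> (k div 2)) else ?\<alpha> (k - ?p))"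
    unfolding gen_diag_def mat_diag_def by (intro eq_matI) (auto simp: min_def max_def)
  also have "\<dots> = mat_diag (s+t) (\<lambda>k. signed_blocks s \<beta> (gen_diag_pos s t k))"
  proof (intro arg_cong[where f = "mat_diag (s+t)"] ext)
    fix k
    show "(if k < 2*?p then (if even k then ?\<alpha> (k div 2) else - ?\<alpha> (k div 2)) else ?\<alpha> (k - ?p)) =
        signed_blocks s \<beta> (gen_diag_pos s t k)"
    proof (cases "k < 2*?p")
      case True
      then have "k div 2 < s" by linarith
      with True show ?thesis unfolding gen_diag_pos_def signed_blocks_def Let_def by auto
    next
      case False
      then show ?thesis unfolding gen_diag_pos_def signed_blocks_def Let_def by auto
    qed
  qed
  finally show ?thesis .
qed

lemma gen_diag_perm_similar:
  fixes \<beta> :: "nat \<Rightarrow> complex"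
  obtains P Q where "inverse_mats (s+t) P Q"
    "mat_diag (s+t) (signed_blocks s \<beta>) =
     P * gen_diag (min s t) (max s t - min s t) 0 (\<lambda>j. if j < s then \<beta> j else - \<beta> j) * Q"
proof -
  let ?\<sigma> = "gen_diag_pos s t" and ?\<tau> = "block_pos s t" and ?d = "signed_blocks s \<beta>"
  have "perm_mat (s+t) ?\<sigma> * gen_diag (min s t) (max s t - min s t) 0 (\<lambda>j. if j < s then \<beta> j else - \<beta> j) *
      perm_mat (s+t) ?\<tau> = perm_mat (s+t) ?\<sigma> * mat_diag (s+t) (\<lambda>k. ?d (?\<sigma> k)) * perm_mat (s+t) ?\<tau>"
    by (simp only: gen_diag_signed)
  also have "\<dots> = mat_diag (s+t) (\<lambda>i. ?d (?\<sigma> (?\<tau> i)))"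
    by (rule perm_mat_conj_mat_diag) (use gen_diag_pos_inverse block_pos_inverse in auto)
  also have "\<dots> = mat_diag (s+t) ?d"
    using block_pos_inverse unfolding mat_diag_def by (intro eq_matI) auto
  finally show ?thesis
    using that[OF inverse_mats_perm_mat[of "s+t" ?\<sigma> ?\<tau>]] gen_diag_pos_inverse block_pos_inverse by auto
qed

lemma generic_params_signed:
  assumes "p + m \<le> N" "\<forall>i<N. \<beta> i \<noteq> 0"
    "\<forall>i<N. \<forall>j<N. i \<noteq> j \<longrightarrow> \<beta> i \<noteq> \<beta> j \<and> \<beta> i \<noteq> - \<beta> j"
  shows "generic_params p m (\<lambda>j. if j < s then \<beta> j else - \<beta> j)"
  unfolding generic_params_def
proof (intro conjI allI impI)
  fix i assume "i < p + m"
  then show "(if i < s then \<beta> i else - \<beta> i) \<noteq> 0" using assms by auto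
next
  fix i j assume ij: "i < p + m" "j < p + m" "i \<noteq> j"
  then have b: "\<beta> i \<noteq> \<beta> j" "\<beta> i \<noteq> - \<beta> j" using assms by auto
  then have "- \<beta> i \<noteq> \<beta> j" "- \<beta> i \<noteq> - \<beta> j" by (metis minus_minus)+
  with b show "(if i < s then \<beta> i else - \<beta> i) \<noteq> (if j < s then \<beta> j else - \<beta> j)"
    and "(if i < s then \<beta> i else - \<beta> i) \<noteq> - (if j < s then \<beta> j else - \<beta> j)" by auto
qed

lemma eventually_generic_shift:
  fixes a :: complex
  shows "\<forall>\<^sub>F z in cofinite. (\<forall>i<N. a + z * of_nat (Suc i) \<noteq> 0) \<and>
    (\<forall>i<N. \<forall>j<N. i \<noteq> j \<longrightarrow> a + z * of_nat (Suc i) \<noteq> a + z * of_nat (Suc j) \<and>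
                a + z * of_nat (Suc i) \<noteq> - (a + z * of_nat (Suc j)))"
proof -
  let ?bad = "{0} \<union> (\<lambda>k. - a / of_nat (Suc k)) ` {..<N} \<union> (\<lambda>k. - (2 * a) / of_nat (Suc (Suc k))) ` {..<2*N}"
  have "z \<in> ?bad" if "i < N" "a + z * of_nat (Suc i) = 0" for z i
  proof -
    have "z * of_nat (Suc i) = - a" using that(2) by (simp only: add_eq_0_iff)
    then have "z = - a / of_nat (Suc i)" by (metis nonzero_mult_div_cancel_right of_nat_neq_0)
    with that(1) show ?thesis by blast
  qed
  moreover have "z \<in> ?bad" if "i \<noteq> j" "a + z * of_nat (Suc i) = a + z * of_nat (Suc j)" for z i j
    using that by auto
  moreover have "z \<in> ?bad"
    if "i < N" "j < N" "a + z * of_nat (Suc i) = - (a + z * of_nat (Suc j))" for z i j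
  proof -
    have "a + z * of_nat (Suc i) + (a + z * of_nat (Suc j)) = 0"
      using that(3) by (simp only: eq_neg_iff_add_eq_0)
    then have "z * of_nat (Suc (Suc (i + j))) + 2 * a = 0" by (simp add: algebra_simps)
    then have "z * of_nat (Suc (Suc (i + j))) = - (2 * a)" by (simp only: eq_neg_iff_add_eq_0)
    then have "z = - (2 * a) / of_nat (Suc (Suc (i + j)))"
      by (metis nonzero_mult_div_cancel_right of_nat_neq_0)
    moreover have "i + j < 2 * N" using that(1,2) by simp
    ultimately show ?thesis by blast
  qed
  ultimately have "{z. \<not> ((\<forall>i<N. a + z * of_nat (Suc i) \<noteq> 0) \<and>
    (\<forall>i<N. \<forall>j<N. i \<noteq> j \<longrightarrow> a + z * of_nat (Suc i) \<noteq> a + z * of_nat (Suc j) \<and>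
                a + z * of_nat (Suc i) \<noteq> - (a + z * of_nat (Suc j))))} \<subseteq> ?bad"
    by blast
  then show ?thesis unfolding eventually_cofinite by (rule finite_subset) simp
qed

section \<open>Diagonalisation\<close>

lemma order_prod_linear_distinct:
  fixes xs :: "'a :: idom list"
  assumes "distinct xs"
  shows "order a (\<Prod>x\<leftarrow>xs. [:- x, 1:]) = (if a \<in> set xs then 1 else 0)"
  using assms
proof (induction xs)
  case Nil
  then show ?case by (simp add: order_0I)
next
  case (Cons x xs)
  have "(\<Prod>x\<leftarrow>xs. [:- x, 1:]) \<noteq> 0" by (auto simp: prod_list_zero_iff)
  then have "[:- x, 1:] * (\<Prod>x\<leftarrow>xs. [:- x, 1:]) \<noteq> 0"
    by (metis mult_eq_0_iff pCons_eq_0_iff one_neq_zero)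
  then have "order a ([:- x, 1:] * (\<Prod>x\<leftarrow>xs. [:- x, 1:])) =
      order a [:- x, 1:] + order a (\<Prod>x\<leftarrow>xs. [:- x, 1:])"
    by (rule order_mult)
  with Cons show ?case by (auto simp: order_linear')
qed

lemma jordan_matrix_blocks_one:
  assumes "\<forall>p\<in>set n_as. fst p = 1"
  shows "jordan_matrix n_as = mat_diag (length n_as) (\<lambda>i. snd (n_as ! i))"
  using assms
proof (induction n_as)
  case Nil
  then show ?case by (intro eq_matI) (auto simp: jordan_matrix_def mat_diag_def)
next
  case (Cons p n_as)
  obtain a where p: "p = (1, a)" using Cons.prems by (cases p) auto
  have len: "sum_list (map fst n_as) = length n_as" using Cons.prems by (induction n_as) auto
  have IH: "jordan_matrix n_as = mat_diag (length n_as) (\<lambda>i. snd (n_as ! i))" using Cons by simp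
  show ?case unfolding p jordan_matrix_Cons len IH
    by (intro eq_matI) (auto simp: jordan_block_def mat_diag_def nth_Cons')
qed

lemma similar_mat_diag_if_distinct_eigenvalues:
  fixes A :: "complex mat"
  assumes A: "A \<in> carrier_mat k k" and cp: "char_poly A = (\<Prod>a\<leftarrow>as. [:- a, 1:])"
    and "distinct as"
  obtains d where "similar_mat A (mat_diag k d)"
proof -
  obtain n_as where jnf: "jordan_nf A n_as" using jordan_nf_exists[OF A cp] by blast
  have "fst p = 1" if "p \<in> set n_as" for p
  proof -
    obtain m a where p: "p = (m, a)" by force
    have "m \<le> order a (char_poly A)"
      using jordan_nf_block_size_order_bound[OF jnf] that p by simp
    also have "\<dots> \<le> 1" unfolding cp order_prod_linear_distinct[OF \<open>distinct as\<close>] by simp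
    finally show ?thesis using jnf that p unfolding jordan_nf_def by force
  qed
  then have J: "jordan_matrix n_as = mat_diag (length n_as) (\<lambda>i. snd (n_as ! i))"
    by (intro jordan_matrix_blocks_one) blast
  have sim: "similar_mat A (jordan_matrix n_as)" using jnf unfolding jordan_nf_def by simp
  then obtain P Q where "similar_mat_wit A (jordan_matrix n_as) P Q"
    unfolding similar_mat_def by blast
  from similar_mat_witD2(5)[OF A this] have "length n_as = k"
    unfolding J mat_diag_def carrier_mat_def by simp
  with sim J that show ?thesis by simp
qed

lemma similar_mat_diag_if_upper_triangular:
  fixes T :: "complex mat"
  assumes T: "T \<in> carrier_mat k k" and "upper_triangular T"
    and dist: "\<And>i j. i < k \<Longrightarrow> j < k \<Longrightarrow> i \<noteq> j \<Longrightarrow> T $$ (i,i) \<noteq> T $$ (j,j)"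
  obtains d where "similar_mat T (mat_diag k d)"
proof -
  have "inj_on (\<lambda>i. T $$ (i,i)) {0..<k}"
    by (rule inj_onI) (metis atLeastLessThan_iff dist)
  then have "distinct (diag_mat T)"
    using T unfolding diag_mat_def by (simp add: distinct_map)
  with similar_mat_diag_if_distinct_eigenvalues[OF T char_poly_upper_triangular[OF T assms(2)]]
  show ?thesis using that by blast
qed

lemma similar_upper_triangular:
  fixes A :: "complex mat"
  assumes "A \<in> carrier_mat k k"
  obtains T where "T \<in> carrier_mat k k" "upper_triangular T" "similar_mat A T"
  using char_poly_factorized[OF assms] schur_decomposition_exists[OF assms] that by blast

lemma eventually_det_shift_nonzero:
  fixes M :: "complex mat"
  assumes M: "M \<in> carrier_mat n n"
  shows "\<forall>\<^sub>F z in cofinite. det (M + z \<cdot>\<^sub>m 1\<^sub>m n) \<noteq> 0"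
proof -
  have "{z. det (M + z \<cdot>\<^sub>m 1\<^sub>m n) = 0} \<subseteq> uminus ` {w. poly (char_poly M) w = 0}"
  proof
    fix z assume "z \<in> {z. det (M + z \<cdot>\<^sub>m 1\<^sub>m n) = 0}"
    moreover have "char_matrix M (- z) = M + z \<cdot>\<^sub>m 1\<^sub>m n" using M unfolding char_matrix_def by simp
    ultimately have "poly (char_poly M) (- z) = 0"
      using eigenvalue_det[OF M] eigenvalue_root_char_poly[OF M] by simp
    then show "z \<in> uminus ` {w. poly (char_poly M) w = 0}" by (intro image_eqI[of _ _ "- z"]) auto
  qed
  moreover have "char_poly M \<noteq> 0" using degree_monic_char_poly[OF M] by auto
  then have "finite (uminus ` {w. poly (char_poly M) w = 0})" by (simp add: poly_roots_finite)
  ultimately show ?thesis unfolding eventually_cofinite by (simp add: finite_subset)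
qed

lemma eventually_distinct_diag_shift:
  fixes T :: "complex mat"
  assumes T: "T \<in> carrier_mat k k"
  shows "\<forall>\<^sub>F z in cofinite. \<forall>i<k. \<forall>j<k. i \<noteq> j \<longrightarrow>
    (T + z \<cdot>\<^sub>m mat_diag k (\<lambda>i. of_nat (Suc i))) $$ (i,i) \<noteq>
    (T + z \<cdot>\<^sub>m mat_diag k (\<lambda>i. of_nat (Suc i))) $$ (j,j)"
proof -
  let ?bad = "(\<lambda>(i,j). (T $$ (j,j) - T $$ (i,i)) / (of_nat i - of_nat j)) ` ({0..<k} \<times> {0..<k})"
  have "z \<in> ?bad"
    if "i < k" "j < k" "i \<noteq> j" "T $$ (i,i) + z * of_nat (Suc i) = T $$ (j,j) + z * of_nat (Suc j)"
    for z i j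
  proof -
    have "z * (of_nat i - of_nat j) = T $$ (j,j) - T $$ (i,i)"
      using that(4) by (simp add: algebra_simps)
    moreover have "(of_nat i - of_nat j :: complex) \<noteq> 0" using that(3) by simp
    ultimately have "z = (T $$ (j,j) - T $$ (i,i)) / (of_nat i - of_nat j)"
      by (simp add: field_simps)
    with that(1,2) show ?thesis by force
  qed
  then have "{z. \<not> (\<forall>i<k. \<forall>j<k. i \<noteq> j \<longrightarrow>
      (T + z \<cdot>\<^sub>m mat_diag k (\<lambda>i. of_nat (Suc i))) $$ (i,i) \<noteq>
      (T + z \<cdot>\<^sub>m mat_diag k (\<lambda>i. of_nat (Suc i))) $$ (j,j))} \<subseteq> ?bad"
    using T by (auto simp: mat_diag_def)
  then show ?thesis unfolding eventually_cofinite by (rule finite_subset) simp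
qed

section \<open>Block matrices\<close>

definition append_cols :: "'a :: zero mat \<Rightarrow> 'a mat \<Rightarrow> 'a mat" (infixr \<open>@\<^sub>c\<close> 65) where
  "A @\<^sub>c B = four_block_mat A B (0\<^sub>m 0 (dim_col A)) (0\<^sub>m 0 (dim_col B))"

lemma carrier_append_cols[simp, intro]:
  "A \<in> carrier_mat nr nc1 \<Longrightarrow> B \<in> carrier_mat nr nc2 \<Longrightarrow> A @\<^sub>c B \<in> carrier_mat nr (nc1 + nc2)"
  unfolding append_cols_def by auto

lemma append_rows_split:
  assumes "X \<in> carrier_mat (nr1 + nr2) nc"
  obtains X1 X2 where "X1 \<in> carrier_mat nr1 nc" "X2 \<in> carrier_mat nr2 nc" "X = X1 @\<^sub>r X2"
proof
  show "X = mat nr1 nc (\<lambda>(i,j). X $$ (i,j)) @\<^sub>r mat nr2 nc (\<lambda>(i,j). X $$ (i + nr1, j))"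
    using assms unfolding append_rows_def by (intro eq_matI) auto
qed auto

lemma append_cols_split:
  assumes "Y \<in> carrier_mat nr (nc1 + nc2)"
  obtains Y1 Y2 where "Y1 \<in> carrier_mat nr nc1" "Y2 \<in> carrier_mat nr nc2" "Y = Y1 @\<^sub>c Y2"
proof
  show "Y = mat nr nc1 (\<lambda>(i,j). Y $$ (i,j)) @\<^sub>c mat nr nc2 (\<lambda>(i,j). Y $$ (i, j + nc1))"
    using assms unfolding append_cols_def by (intro eq_matI) auto
qed auto

lemma append_rows_line:
  assumes "X1 \<in> carrier_mat nr1 nc" "X2 \<in> carrier_mat nr2 nc"
    "X1' \<in> carrier_mat nr1 nc" "X2' \<in> carrier_mat nr2 nc"
  shows "(X1 @\<^sub>r X2) + z \<cdot>\<^sub>m (X1' @\<^sub>r X2') = (X1 + z \<cdot>\<^sub>m X1') @\<^sub>r (X2 + z \<cdot>\<^sub>m X2')"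
  using assms unfolding append_rows_def by (intro eq_matI) auto

lemma append_cols_line:
  assumes "Y1 \<in> carrier_mat nr nc1" "Y2 \<in> carrier_mat nr nc2"
    "Y1' \<in> carrier_mat nr nc1" "Y2' \<in> carrier_mat nr nc2"
  shows "(Y1 @\<^sub>c Y2) + z \<cdot>\<^sub>m (Y1' @\<^sub>c Y2') = (Y1 + z \<cdot>\<^sub>m Y1') @\<^sub>c (Y2 + z \<cdot>\<^sub>m Y2')"
  using assms unfolding append_cols_def by (intro eq_matI) auto

lemma four_block_mult_append_rows:
  assumes "A \<in> carrier_mat n1 n1" "B \<in> carrier_mat n1 n2" "C \<in> carrier_mat n2 n1" "D \<in> carrier_mat n2 n2"
    "X1 \<in> carrier_mat n1 nc" "X2 \<in> carrier_mat n2 nc"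
  shows "four_block_mat A B C D * (X1 @\<^sub>r X2) = (A * X1 + B * X2) @\<^sub>r (C * X1 + D * X2)"
proof -
  have "four_block_mat A B C D * four_block_mat X1 (0\<^sub>m n1 0) X2 (0\<^sub>m n2 0) =
      four_block_mat (A * X1 + B * X2) (A * 0\<^sub>m n1 0 + B * 0\<^sub>m n2 0)
        (C * X1 + D * X2) (C * 0\<^sub>m n1 0 + D * 0\<^sub>m n2 0)"
    by (rule mult_four_block_mat) (use assms in auto)
  then show ?thesis using assms by (simp add: append_rows_def)
qed

lemma append_rows_mult:
  assumes "X1 \<in> carrier_mat nr1 nc" "X2 \<in> carrier_mat nr2 nc" "G \<in> carrier_mat nc nc'"
  shows "(X1 @\<^sub>r X2) * G = (X1 * G) @\<^sub>r (X2 * G)"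
proof -
  have "G = four_block_mat G (0\<^sub>m nc 0) (0\<^sub>m 0 nc') (0\<^sub>m 0 0)"
    using assms(3) by (intro eq_matI) auto
  moreover have "four_block_mat X1 (0\<^sub>m nr1 0) X2 (0\<^sub>m nr2 0) * four_block_mat G (0\<^sub>m nc 0) (0\<^sub>m 0 nc') (0\<^sub>m 0 0) =
      four_block_mat (X1 * G + 0\<^sub>m nr1 0 * 0\<^sub>m 0 nc') (X1 * 0\<^sub>m nc 0 + 0\<^sub>m nr1 0 * 0\<^sub>m 0 0)
        (X2 * G + 0\<^sub>m nr2 0 * 0\<^sub>m 0 nc') (X2 * 0\<^sub>m nc 0 + 0\<^sub>m nr2 0 * 0\<^sub>m 0 0)"
    by (rule mult_four_block_mat) (use assms in auto)
  ultimately show ?thesis using assms by (simp add: append_rows_def)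
qed

lemma append_cols_mult_four_block:
  assumes "A \<in> carrier_mat n1 n1" "B \<in> carrier_mat n1 n2" "C \<in> carrier_mat n2 n1" "D \<in> carrier_mat n2 n2"
    "Y1 \<in> carrier_mat nr n1" "Y2 \<in> carrier_mat nr n2"
  shows "(Y1 @\<^sub>c Y2) * four_block_mat A B C D = (Y1 * A + Y2 * C) @\<^sub>c (Y1 * B + Y2 * D)"
proof -
  have "four_block_mat Y1 Y2 (0\<^sub>m 0 n1) (0\<^sub>m 0 n2) * four_block_mat A B C D =
      four_block_mat (Y1 * A + Y2 * C) (Y1 * B + Y2 * D)
        (0\<^sub>m 0 n1 * A + 0\<^sub>m 0 n2 * C) (0\<^sub>m 0 n1 * B + 0\<^sub>m 0 n2 * D)"
    by (rule mult_four_block_mat) (use assms in auto)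
  then show ?thesis using assms by (simp add: append_cols_def)
qed

lemma mult_append_cols:
  assumes "G \<in> carrier_mat nr' nr" "Y1 \<in> carrier_mat nr nc1" "Y2 \<in> carrier_mat nr nc2"
  shows "G * (Y1 @\<^sub>c Y2) = (G * Y1) @\<^sub>c (G * Y2)"
proof -
  have "G = four_block_mat G (0\<^sub>m nr' 0) (0\<^sub>m 0 nr) (0\<^sub>m 0 0)"
    using assms(1) by (intro eq_matI) auto
  moreover have "four_block_mat G (0\<^sub>m nr' 0) (0\<^sub>m 0 nr) (0\<^sub>m 0 0) * four_block_mat Y1 Y2 (0\<^sub>m 0 nc1) (0\<^sub>m 0 nc2) =
      four_block_mat (G * Y1 + 0\<^sub>m nr' 0 * 0\<^sub>m 0 nc1) (G * Y2 + 0\<^sub>m nr' 0 * 0\<^sub>m 0 nc2)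
        (0\<^sub>m 0 nr * Y1 + 0\<^sub>m 0 0 * 0\<^sub>m 0 nc1) (0\<^sub>m 0 nr * Y2 + 0\<^sub>m 0 0 * 0\<^sub>m 0 nc2)"
    by (rule mult_four_block_mat) (use assms in auto)
  ultimately show ?thesis using assms by (simp add: append_cols_def)
qed

lemma uminus_zero_mat[simp]: "- 0\<^sub>m nr nc = (0\<^sub>m nr nc :: 'a :: group_add mat)"
  by (intro eq_matI) auto

lemma inverse_mats_four_block_diag:
  assumes "inverse_mats n1 A A'" "inverse_mats n2 D D'"
  shows "inverse_mats (n1 + n2) (four_block_mat A (0\<^sub>m n1 n2) (0\<^sub>m n2 n1) D)
           (four_block_mat A' (0\<^sub>m n1 n2) (0\<^sub>m n2 n1) D')"
proof -
  have c: "A \<in> carrier_mat n1 n1" "A' \<in> carrier_mat n1 n1" "D \<in> carrier_mat n2 n2" "D' \<in> carrier_mat n2 n2"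
    using assms unfolding inverse_mats_def by auto
  show ?thesis
    using assms c unfolding inverse_mats_def
    by (simp add: mult_four_block_mat[OF c(1) zero_carrier_mat zero_carrier_mat c(3) c(2) zero_carrier_mat zero_carrier_mat c(4)]
        mult_four_block_mat[OF c(2) zero_carrier_mat zero_carrier_mat c(4) c(1) zero_carrier_mat zero_carrier_mat c(3)])
qed

lemma inverse_mats_four_block_lower:
  fixes A :: "'a :: ring_1 mat"
  assumes AA': "inverse_mats n1 A A'" and C: "C \<in> carrier_mat n2 n1"
  shows "inverse_mats (n1 + n2) (four_block_mat A (0\<^sub>m n1 n2) C (1\<^sub>m n2))
           (four_block_mat A' (0\<^sub>m n1 n2) (- (C * A')) (1\<^sub>m n2))"
proof -
  have c: "A \<in> carrier_mat n1 n1" "A' \<in> carrier_mat n1 n1" and inv: "A * A' = 1\<^sub>m n1" "A' * A = 1\<^sub>m n1"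
    using AA' unfolding inverse_mats_def by auto
  have CA': "- (C * A') \<in> carrier_mat n2 n1" using C c by simp
  have "C * A' + 1\<^sub>m n2 * - (C * A') = 0\<^sub>m n2 n1"
    using C c by (intro eq_matI) auto
  moreover have "- (C * A') * A + 1\<^sub>m n2 * C = 0\<^sub>m n2 n1"
    using C c inv by (simp add: assoc_mult_mat[OF C c(2) c(1)])
  ultimately show ?thesis
    unfolding inverse_mats_def using c C CA' inv
    by (simp add: mult_four_block_mat[OF c(1) zero_carrier_mat C one_carrier_mat c(2) zero_carrier_mat CA' one_carrier_mat]
        mult_four_block_mat[OF c(2) zero_carrier_mat CA' one_carrier_mat c(1) zero_carrier_mat C one_carrier_mat])
qed

lemma inverse_mats_four_block_upper_unit:
  fixes W :: "'a :: ring_1 mat"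
  assumes W: "W \<in> carrier_mat n1 n2"
  shows "inverse_mats (n1 + n2) (four_block_mat (1\<^sub>m n1) W (0\<^sub>m n2 n1) (1\<^sub>m n2))
           (four_block_mat (1\<^sub>m n1) (- W) (0\<^sub>m n2 n1) (1\<^sub>m n2))"
proof -
  have mW: "- W \<in> carrier_mat n1 n2" using W by simp
  have "W + - W = 0\<^sub>m n1 n2" using W by (intro eq_matI) auto
  then show ?thesis
    unfolding inverse_mats_def using W mW
    by (simp add: mult_four_block_mat[OF one_carrier_mat W zero_carrier_mat one_carrier_mat one_carrier_mat mW zero_carrier_mat one_carrier_mat]
        mult_four_block_mat[OF one_carrier_mat mW zero_carrier_mat one_carrier_mat one_carrier_mat W zero_carrier_mat one_carrier_mat])
qed

section \<open>Rank bounds\<close>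

lemma rank_le_card_nonzero_rows:
  fixes M :: "'a :: field mat"
  assumes "finite I" "M \<in> carrier_mat n nc" "\<And>i j. i < n \<Longrightarrow> j < nc \<Longrightarrow> i \<notin> I \<Longrightarrow> M $$ (i,j) = 0"
  shows "vec_space.rank n M \<le> card I"
  using assms
proof (induction I arbitrary: M rule: finite_induct)
  case empty
  then have "M = 0\<^sub>m n nc" by (intro eq_matI) auto
  then show ?case using vec_space.rank_0I by simp
next
  case (insert k I)
  define M1 where "M1 = mat n nc (\<lambda>(i,j). if i = k then M $$ (i,j) else 0)"
  define M2 where "M2 = mat n nc (\<lambda>(i,j). if i = k then 0 else M $$ (i,j))"
  have c: "M1 \<in> carrier_mat n nc" "M2 \<in> carrier_mat n nc" unfolding M1_def M2_def by auto
  have "M = M1 + M2" unfolding M1_def M2_def using insert.prems by (intro eq_matI) auto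
  then have "vec_space.rank n M \<le> vec_space.rank n M1 + vec_space.rank n M2"
    using vec_space.rank_subadditive[OF c] by simp
  moreover have "vec_space.rank n M1 \<le> 1"
    by (rule vec_space.rank_le_1_product_entries[OF c(1), of "\<lambda>i. if i = k then 1 else 0" "\<lambda>j. M $$ (k,j)"])
      (auto simp: M1_def)
  moreover have "vec_space.rank n M2 \<le> card I"
    by (rule insert.IH[OF c(2)]) (use insert.prems in \<open>auto simp: M2_def\<close>)
  ultimately show ?case using insert by simp
qed

lemma rank_le_card_nonzero_cols:
  fixes M :: "'a :: field mat"
  assumes "finite J" "M \<in> carrier_mat n nc" "\<And>i j. i < n \<Longrightarrow> j < nc \<Longrightarrow> j \<notin> J \<Longrightarrow> M $$ (i,j) = 0"
  shows "vec_space.rank n M \<le> card J"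
  using assms
proof (induction J arbitrary: M rule: finite_induct)
  case empty
  then have "M = 0\<^sub>m n nc" by (intro eq_matI) auto
  then show ?case using vec_space.rank_0I by simp
next
  case (insert k J)
  define M1 where "M1 = mat n nc (\<lambda>(i,j). if j = k then M $$ (i,j) else 0)"
  define M2 where "M2 = mat n nc (\<lambda>(i,j). if j = k then 0 else M $$ (i,j))"
  have c: "M1 \<in> carrier_mat n nc" "M2 \<in> carrier_mat n nc" unfolding M1_def M2_def by auto
  have "M = M1 + M2" unfolding M1_def M2_def using insert.prems by (intro eq_matI) auto
  then have "vec_space.rank n M \<le> vec_space.rank n M1 + vec_space.rank n M2"
    using vec_space.rank_subadditive[OF c] by simp
  moreover have "vec_space.rank n M1 \<le> 1"
    by (rule vec_space.rank_le_1_product_entries[OF c(1), of "\<lambda>i. M $$ (i,k)" "\<lambda>j. if j = k then 1 else 0"])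
      (auto simp: M1_def)
  moreover have "vec_space.rank n M2 \<le> card J"
    by (rule insert.IH[OF c(2)]) (use insert.prems in \<open>auto simp: M2_def\<close>)
  ultimately show ?case using insert by simp
qed

section \<open>Invariant line-closed properties of rectangular pairs\<close>

definition diag_rect_mat :: "nat \<Rightarrow> nat \<Rightarrow> (nat \<Rightarrow> 'a :: zero) \<Rightarrow> 'a mat" where
  "diag_rect_mat nr nc d = mat nr nc (\<lambda>(i,j). if i = j then d i else 0)"

locale line_closed_invariant_pred =
  fixes t u :: nat and P :: "complex mat \<Rightarrow> complex mat \<Rightarrow> bool"
  assumes invariant: "\<And>X Y G G' H H'. X \<in> carrier_mat (t+u) t \<Longrightarrow> Y \<in> carrier_mat t (t+u) \<Longrightarrow>
      inverse_mats (t+u) G G' \<Longrightarrow> inverse_mats t H H' \<Longrightarrow> P X Y \<Longrightarrow> P (G * X * H') (H * Y * G')"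
    and diagonal: "\<And>x y. P (diag_rect_mat (t+u) t x) (diag_rect_mat t (t+u) y)"
    and line_closed: "\<And>X0 X1 Y0 Y1. X0 \<in> carrier_mat (t+u) t \<Longrightarrow> X1 \<in> carrier_mat (t+u) t \<Longrightarrow>
      Y0 \<in> carrier_mat t (t+u) \<Longrightarrow> Y1 \<in> carrier_mat t (t+u) \<Longrightarrow>
      (\<forall>\<^sub>F z in cofinite. P (X0 + z \<cdot>\<^sub>m X1) (Y0 + z \<cdot>\<^sub>m Y1)) \<Longrightarrow> P X0 Y0"
begin

abbreviation top_one :: "complex mat" where
  "top_one \<equiv> 1\<^sub>m t @\<^sub>r 0\<^sub>m u t"

lemma top_one_carrier: "top_one \<in> carrier_mat (t+u) t"
  by auto

lemma top_one_mat_diag: "P top_one (mat_diag t d @\<^sub>c 0\<^sub>m t u)"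
proof -
  have "diag_rect_mat (t+u) t (\<lambda>_. 1) = top_one"
    and "diag_rect_mat t (t+u) d = mat_diag t d @\<^sub>c 0\<^sub>m t u"
    unfolding diag_rect_mat_def append_rows_def append_cols_def mat_diag_def by (auto intro!: eq_matI)
  then show ?thesis using diagonal[of "\<lambda>_. 1" d] by simp
qed

lemma top_one_similar:
  assumes "similar_mat Z M" "Z \<in> carrier_mat t t" "P top_one (M @\<^sub>c 0\<^sub>m t u)"
  shows "P top_one (Z @\<^sub>c 0\<^sub>m t u)"
proof -
  obtain R R' where "similar_mat_wit Z M R R'" using assms(1) unfolding similar_mat_def by blast
  note w = similar_mat_witD2[OF assms(2) this]
  have RR': "inverse_mats t R R'" using w unfolding inverse_mats_def by auto
  define G where "G = four_block_mat R (0\<^sub>m t u) (0\<^sub>m u t) (1\<^sub>m u)"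
  define G' where "G' = four_block_mat R' (0\<^sub>m t u) (0\<^sub>m u t) (1\<^sub>m u)"
  have GG': "inverse_mats (t+u) G G'"
    unfolding G_def G'_def by (rule inverse_mats_four_block_diag[OF RR']) (simp add: inverse_mats_def)
  have "G * top_one = R @\<^sub>r 0\<^sub>m u t"
    unfolding G_def using w
    by (simp add: four_block_mult_append_rows[OF _ zero_carrier_mat zero_carrier_mat one_carrier_mat one_carrier_mat zero_carrier_mat])
  then have X: "G * top_one * R' = top_one"
    using w by (simp add: append_rows_mult[of _ t t _ u])
  have "R * (M @\<^sub>c 0\<^sub>m t u) = (R * M) @\<^sub>c 0\<^sub>m t u"
    using w by (simp add: mult_append_cols[of _ t t _ t _ u])
  then have Y: "R * (M @\<^sub>c 0\<^sub>m t u) * G' = Z @\<^sub>c 0\<^sub>m t u"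
    unfolding G'_def using w
    by (simp add: append_cols_mult_four_block[OF w(7) zero_carrier_mat zero_carrier_mat one_carrier_mat _ zero_carrier_mat])
  show ?thesis using invariant[OF top_one_carrier _ GG' RR' assms(3)] w unfolding X Y by auto
qed

lemma top_one_upper_triangular:
  assumes T: "T \<in> carrier_mat t t" "upper_triangular T"
  shows "P top_one (T @\<^sub>c 0\<^sub>m t u)"
proof (rule line_closed)
  let ?D = "mat_diag t (\<lambda>i. of_nat (Suc i)) :: complex mat"
  show "\<forall>\<^sub>F z in cofinite. P (top_one + z \<cdot>\<^sub>m 0\<^sub>m (t+u) t) ((T @\<^sub>c 0\<^sub>m t u) + z \<cdot>\<^sub>m (?D @\<^sub>c 0\<^sub>m t u))"
    using eventually_distinct_diag_shift[OF T(1)]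
  proof eventually_elim
    case (elim z)
    let ?T = "T + z \<cdot>\<^sub>m ?D"
    have Tc: "?T \<in> carrier_mat t t" using T by simp
    have "upper_triangular ?T" using T by (auto simp: upper_triangular_def mat_diag_def)
    then obtain d where "similar_mat ?T (mat_diag t d)"
      using similar_mat_diag_if_upper_triangular[OF Tc] elim by blast
    then have "P top_one (?T @\<^sub>c 0\<^sub>m t u)" using top_one_similar top_one_mat_diag Tc by blast
    moreover have "top_one + z \<cdot>\<^sub>m 0\<^sub>m (t+u) t = top_one" by (intro eq_matI) auto
    moreover have "(T @\<^sub>c 0\<^sub>m t u) + z \<cdot>\<^sub>m (?D @\<^sub>c 0\<^sub>m t u) = ?T @\<^sub>c 0\<^sub>m t u"
      using T by (simp add: append_cols_line[of _ t t _ u])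
    ultimately show ?case by simp
  qed
qed (use T in auto)

lemma top_one_square:
  assumes "Z \<in> carrier_mat t t"
  shows "P top_one (Z @\<^sub>c 0\<^sub>m t u)"
proof -
  obtain T where "T \<in> carrier_mat t t" "upper_triangular T" "similar_mat Z T"
    using similar_upper_triangular[OF assms] .
  then show ?thesis using top_one_similar top_one_upper_triangular assms by blast
qed

lemma top_one_invertible_left:
  assumes Y1: "inverse_mats t Y1 Y1'" and Y2: "Y2 \<in> carrier_mat t u"
  shows "P top_one (Y1 @\<^sub>c Y2)"
proof -
  have c: "Y1 \<in> carrier_mat t t" "Y1' \<in> carrier_mat t t" "Y1 * Y1' = 1\<^sub>m t"
    using Y1 unfolding inverse_mats_def by auto
  define W where "W = Y1' * Y2"
  have W: "W \<in> carrier_mat t u" unfolding W_def using c Y2 by simp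
  define G where "G = four_block_mat (1\<^sub>m t) (- W) (0\<^sub>m u t) (1\<^sub>m u)"
  define G' where "G' = four_block_mat (1\<^sub>m t) W (0\<^sub>m u t) (1\<^sub>m u)"
  have GG': "inverse_mats (t+u) G G'"
    unfolding G_def G'_def by (rule inverse_mats_sym[OF inverse_mats_four_block_upper_unit[OF W]])
  have X: "G * top_one * 1\<^sub>m t = top_one"
    unfolding G_def using W
    by (simp add: four_block_mult_append_rows[OF one_carrier_mat _ zero_carrier_mat one_carrier_mat one_carrier_mat zero_carrier_mat]
        right_mult_one_mat[OF top_one_carrier])
  have "Y1 * W = Y2" unfolding W_def using c Y2 by (simp add: assoc_mult_mat[symmetric, of _ t t _ t _ u])
  then have Y: "1\<^sub>m t * (Y1 @\<^sub>c 0\<^sub>m t u) * G' = Y1 @\<^sub>c Y2"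
    unfolding G'_def using c W Y2
    by (simp add: append_cols_mult_four_block[OF one_carrier_mat W zero_carrier_mat one_carrier_mat c(1) zero_carrier_mat]
        left_mult_one_mat[OF carrier_append_cols[OF c(1) zero_carrier_mat]])
  have "P (G * top_one * 1\<^sub>m t) (1\<^sub>m t * (Y1 @\<^sub>c 0\<^sub>m t u) * G')"
    by (rule invariant[OF top_one_carrier _ GG' inverse_mats_one top_one_square[OF c(1)]]) (use c in auto)
  then show ?thesis unfolding X Y .
qed

lemma top_one_any:
  assumes "Y \<in> carrier_mat t (t+u)"
  shows "P top_one Y"
proof -
  obtain Y1 Y2 where Y: "Y1 \<in> carrier_mat t t" "Y2 \<in> carrier_mat t u" "Y = Y1 @\<^sub>c Y2"
    using append_cols_split[OF assms] .
  show ?thesis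
  proof (rule line_closed)
    show "\<forall>\<^sub>F z in cofinite. P (top_one + z \<cdot>\<^sub>m 0\<^sub>m (t+u) t) (Y + z \<cdot>\<^sub>m (1\<^sub>m t @\<^sub>c 0\<^sub>m t u))"
      using eventually_det_shift_nonzero[OF Y(1)]
    proof eventually_elim
      case (elim z)
      obtain M' where "inverse_mats t (Y1 + z \<cdot>\<^sub>m 1\<^sub>m t) M'"
        by (rule inverse_mats_det[of _ t]) (use elim Y(1) in auto)
      then have "P top_one ((Y1 + z \<cdot>\<^sub>m 1\<^sub>m t) @\<^sub>c Y2)" using top_one_invertible_left Y(2) by blast
      moreover have "top_one + z \<cdot>\<^sub>m 0\<^sub>m (t+u) t = top_one" by (intro eq_matI) auto
      moreover have "Y + z \<cdot>\<^sub>m (1\<^sub>m t @\<^sub>c 0\<^sub>m t u) = (Y1 + z \<cdot>\<^sub>m 1\<^sub>m t) @\<^sub>c Y2"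
        using Y by (simp add: append_cols_line[of _ t t _ u])
      ultimately show ?case by simp
    qed
  qed (use assms in auto)
qed

lemma invertible_top_block:
  assumes X1: "inverse_mats t X1 X1'" and X3: "X3 \<in> carrier_mat u t" and Y: "Y \<in> carrier_mat t (t+u)"
  shows "P (X1 @\<^sub>r X3) Y"
proof -
  have c: "X1 \<in> carrier_mat t t" using X1 unfolding inverse_mats_def by auto
  define G where "G = four_block_mat X1 (0\<^sub>m t u) X3 (1\<^sub>m u)"
  define G' where "G' = four_block_mat X1' (0\<^sub>m t u) (- (X3 * X1')) (1\<^sub>m u)"
  have GG': "inverse_mats (t+u) G G'"
    unfolding G_def G'_def by (rule inverse_mats_four_block_lower[OF X1 X3])
  then have Gc: "G \<in> carrier_mat (t+u) (t+u)" "G' \<in> carrier_mat (t+u) (t+u)" "G * G' = 1\<^sub>m (t+u)"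
    unfolding inverse_mats_def by auto
  have X: "G * top_one * 1\<^sub>m t = X1 @\<^sub>r X3"
    unfolding G_def using c X3
    by (simp add: four_block_mult_append_rows[OF _ zero_carrier_mat _ one_carrier_mat one_carrier_mat zero_carrier_mat]
        right_mult_one_mat[OF carrier_append_rows[OF c X3]])
  have Y': "1\<^sub>m t * (Y * G) * G' = Y"
    using Y Gc by (simp add: assoc_mult_mat[of Y t "t+u" G "t+u" G' "t+u"])
  have YG: "Y * G \<in> carrier_mat t (t+u)" using Y Gc by simp
  have "P (G * top_one * 1\<^sub>m t) (1\<^sub>m t * (Y * G) * G')"
    by (rule invariant[OF top_one_carrier YG GG' inverse_mats_one top_one_any[OF YG]])
  then show ?thesis unfolding X Y' .
qed

theorem all_pairs:
  assumes X: "X \<in> carrier_mat (t+u) t" and Y: "Y \<in> carrier_mat t (t+u)"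
  shows "P X Y"
proof -
  obtain X1 X3 where X': "X1 \<in> carrier_mat t t" "X3 \<in> carrier_mat u t" "X = X1 @\<^sub>r X3"
    using append_rows_split[OF X] .
  show ?thesis
  proof (rule line_closed)
    show "\<forall>\<^sub>F z in cofinite. P (X + z \<cdot>\<^sub>m top_one) (Y + z \<cdot>\<^sub>m 0\<^sub>m t (t+u))"
      using eventually_det_shift_nonzero[OF X'(1)]
    proof eventually_elim
      case (elim z)
      obtain M' where "inverse_mats t (X1 + z \<cdot>\<^sub>m 1\<^sub>m t) M'"
        by (rule inverse_mats_det[of _ t]) (use elim X'(1) in auto)
      then have "P ((X1 + z \<cdot>\<^sub>m 1\<^sub>m t) @\<^sub>r X3) Y" using invertible_top_block X'(2) Y by blast
      moreover have "X + z \<cdot>\<^sub>m top_one = (X1 + z \<cdot>\<^sub>m 1\<^sub>m t) @\<^sub>r X3"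
        using X' by (simp add: append_rows_line[of _ t t _ u])
      moreover have "Y + z \<cdot>\<^sub>m 0\<^sub>m t (t+u) = Y" using Y by (intro eq_matI) auto
      ultimately show ?case by simp
    qed
  qed (use X Y in auto)
qed

end

section \<open>Anticommuting partners of a signed scalar matrix\<close>

definition sign_diag :: "nat \<Rightarrow> nat \<Rightarrow> complex \<Rightarrow> complex mat" where
  "sign_diag s t a = mat_diag (s+t) (\<lambda>i. if i < s then a else - a)"

definition offdiag_mat :: "nat \<Rightarrow> nat \<Rightarrow> 'a :: zero mat \<Rightarrow> 'a mat \<Rightarrow> 'a mat" where
  "offdiag_mat s t X Y = four_block_mat (0\<^sub>m s s) X Y (0\<^sub>m t t)"

definition pair_in_Z :: "nat \<Rightarrow> nat \<Rightarrow> complex \<Rightarrow> complex mat \<Rightarrow> complex mat \<Rightarrow> bool" where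
  "pair_in_Z s t a X Y \<longleftrightarrow>
     (sign_diag s t a, offdiag_mat s t X Y) \<in> Zpmr (min s t) (max s t - min s t) 0"

lemma min_max_dim: "2 * min s t + (max s t - min s t) + 0 = s + (t :: nat)"
  by (simp add: min_def max_def)

lemma Zpmr_min_max:
  "Zpmr (min s t) (max s t - min s t) 0 =
   zariski_closure_in (s+t) (generic_orbits (min s t) (max s t - min s t) 0)"
  using Zpmr_generic_orbits[of "min s t" "max s t - min s t" 0] unfolding min_max_dim .

lemma sign_diag_carrier[simp]: "sign_diag s t a \<in> carrier_mat (s+t) (s+t)"
  unfolding sign_diag_def by simp

lemma offdiag_mat_carrier[simp]:
  "X \<in> carrier_mat s t \<Longrightarrow> Y \<in> carrier_mat t s \<Longrightarrow> offdiag_mat s t X Y \<in> carrier_mat (s+t) (s+t)"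
  unfolding offdiag_mat_def by simp

lemma index_offdiag_mat:
  assumes "X \<in> carrier_mat s t" "Y \<in> carrier_mat t s" "i < s + t" "j < s + t"
  shows "offdiag_mat s t X Y $$ (i,j) = (if i < s then (if j < s then 0 else X $$ (i, j - s))
                                       else (if j < s then Y $$ (i - s, j) else 0))"
  using assms unfolding offdiag_mat_def by simp

lemma anticomm_mat_diag_iff:
  fixes g :: "nat \<Rightarrow> 'a :: comm_semiring_1"
  assumes "B \<in> carrier_mat n n"
  shows "mat_diag n g * B + B * mat_diag n g = 0\<^sub>m n n \<longleftrightarrow> (\<forall>i<n. \<forall>j<n. (g i + g j) * B $$ (i,j) = 0)"
proof -
  have "mat_diag n g * B + B * mat_diag n g = mat n n (\<lambda>(i,j). (g i + g j) * B $$ (i,j))"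
    using assms by (auto simp: mat_diag_mult_left mat_diag_mult_right distrib_right mult.commute intro!: eq_matI)
  also have "\<dots> = 0\<^sub>m n n \<longleftrightarrow> (\<forall>i<n. \<forall>j<n. (g i + g j) * B $$ (i,j) = 0)"
  proof
    assume "mat n n (\<lambda>(i,j). (g i + g j) * B $$ (i,j)) = 0\<^sub>m n n"
    then show "\<forall>i<n. \<forall>j<n. (g i + g j) * B $$ (i,j) = 0"
      by (metis (no_types, lifting) case_prod_conv index_mat(1) index_zero_mat(1))
  qed (auto intro!: eq_matI)
  finally show ?thesis .
qed

lemma anticomm_var_sign_diag_offdiag:
  assumes "X \<in> carrier_mat s t" "Y \<in> carrier_mat t s"
  shows "(sign_diag s t a, offdiag_mat s t X Y) \<in> anticomm_var (s+t)"
  using assms unfolding anticomm_var_def sign_diag_def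
  by (auto simp: anticomm_mat_diag_iff index_offdiag_mat)

lemma offdiag_if_anticomm_sign_diag:
  assumes "a \<noteq> 0" "B \<in> carrier_mat (s+t) (s+t)"
    and "sign_diag s t a * B + B * sign_diag s t a = 0\<^sub>m (s+t) (s+t)"
  obtains X Y where "X \<in> carrier_mat s t" "Y \<in> carrier_mat t s" "B = offdiag_mat s t X Y"
proof
  have "((if i < s then a else - a) + (if j < s then a else - a)) * B $$ (i,j) = 0"
    if "i < s + t" "j < s + t" for i j
    using assms(3) that unfolding sign_diag_def anticomm_mat_diag_iff[OF assms(2)] by blast
  then have "B $$ (i,j) = 0" if "i < s + t" "j < s + t" "i < s \<longleftrightarrow> j < s" for i j
    using that assms(1) by (force split: if_splits)
  moreover have c: "mat s t (\<lambda>(i,j). B $$ (i, j + s)) \<in> carrier_mat s t"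
    "mat t s (\<lambda>(i,j). B $$ (i + s, j)) \<in> carrier_mat t s" by auto
  ultimately show "B = offdiag_mat s t (mat s t (\<lambda>(i,j). B $$ (i, j + s))) (mat t s (\<lambda>(i,j). B $$ (i + s, j)))"
    using assms(2) carrier_matD[OF offdiag_mat_carrier[OF c]]
    by (intro eq_matI) (auto simp: index_offdiag_mat[OF c])
qed auto

lemma block_diag_mult_offdiag:
  assumes "G1 \<in> carrier_mat s s" "G2 \<in> carrier_mat t t" "H1 \<in> carrier_mat s s" "H2 \<in> carrier_mat t t"
    "X \<in> carrier_mat s t" "Y \<in> carrier_mat t s"
  shows "four_block_mat G1 (0\<^sub>m s t) (0\<^sub>m t s) G2 * offdiag_mat s t X Y * four_block_mat H1 (0\<^sub>m s t) (0\<^sub>m t s) H2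
    = offdiag_mat s t (G1 * X * H2) (G2 * Y * H1)"
proof -
  have GX: "G1 * X \<in> carrier_mat s t" and GY: "G2 * Y \<in> carrier_mat t s" using assms by auto
  have "four_block_mat G1 (0\<^sub>m s t) (0\<^sub>m t s) G2 * offdiag_mat s t X Y =
      offdiag_mat s t (G1 * X) (G2 * Y)"
    unfolding offdiag_mat_def using assms
    by (simp add: mult_four_block_mat[OF assms(1) zero_carrier_mat zero_carrier_mat assms(2)
          zero_carrier_mat assms(5) assms(6) zero_carrier_mat])
  moreover have "offdiag_mat s t (G1 * X) (G2 * Y) * four_block_mat H1 (0\<^sub>m s t) (0\<^sub>m t s) H2 =
      offdiag_mat s t (G1 * X * H2) (G2 * Y * H1)"
    unfolding offdiag_mat_def using assms GX GY
    by (simp add: mult_four_block_mat[OF zero_carrier_mat GX GY zero_carrier_mat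
          assms(3) zero_carrier_mat zero_carrier_mat assms(4)])
  ultimately show ?thesis by simp
qed

lemma block_diag_mult_sign_diag:
  assumes "G1 \<in> carrier_mat s s" "G2 \<in> carrier_mat t t"
  shows "four_block_mat G1 (0\<^sub>m s t) (0\<^sub>m t s) G2 * sign_diag s t a =
         sign_diag s t a * four_block_mat G1 (0\<^sub>m s t) (0\<^sub>m t s) G2"
  unfolding sign_diag_def using assms
  by (auto simp: mat_diag_mult_left[of _ "s+t" "s+t"] mat_diag_mult_right[of _ "s+t" "s+t"] intro!: eq_matI)

lemma pair_in_Z_conj:
  assumes X: "X \<in> carrier_mat s t" and Y: "Y \<in> carrier_mat t s"
    and G1: "inverse_mats s G1 G1'" and G2: "inverse_mats t G2 G2'"
    and "pair_in_Z s t a X Y"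
  shows "pair_in_Z s t a (G1 * X * G2') (G2 * Y * G1')"
proof -
  let ?n = "s + t" and ?S = "generic_orbits (min s t) (max s t - min s t) 0"
  define P where "P = four_block_mat G1 (0\<^sub>m s t) (0\<^sub>m t s) G2"
  define Q where "Q = four_block_mat G1' (0\<^sub>m s t) (0\<^sub>m t s) G2'"
  have PQ: "inverse_mats ?n P Q"
    unfolding P_def Q_def by (rule inverse_mats_four_block_diag[OF G1 G2])
  have c: "G1 \<in> carrier_mat s s" "G1' \<in> carrier_mat s s" "G2 \<in> carrier_mat t t" "G2' \<in> carrier_mat t t"
    using G1 G2 unfolding inverse_mats_def by auto
  have Pc: "P \<in> carrier_mat ?n ?n" "Q \<in> carrier_mat ?n ?n" "P * Q = 1\<^sub>m ?n"
    using PQ unfolding inverse_mats_def by auto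
  have "P * sign_diag s t a = sign_diag s t a * P"
    unfolding P_def by (rule block_diag_mult_sign_diag[OF c(1,3)])
  then have A: "P * sign_diag s t a * Q = sign_diag s t a"
    using Pc by (simp add: assoc_mult_mat[OF sign_diag_carrier Pc(1) Pc(2)] right_mult_one_mat[OF sign_diag_carrier])
  have B: "P * offdiag_mat s t X Y * Q = offdiag_mat s t (G1 * X * G2') (G2 * Y * G1')"
    unfolding P_def Q_def by (rule block_diag_mult_offdiag[OF c(1,3,2,4) X Y])
  have "(P * fst (sign_diag s t a, offdiag_mat s t X Y) * Q, P * snd (sign_diag s t a, offdiag_mat s t X Y) * Q)
      \<in> zariski_closure_in ?n ?S"
  proof (rule zariski_closure_in_conj[OF _ PQ])
    show "(sign_diag s t a, offdiag_mat s t X Y) \<in> zariski_closure_in ?n ?S"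
      using assms(5) unfolding pair_in_Z_def Zpmr_min_max .
    show "(P * A * Q, P * B * Q) \<in> ?S" if "(A, B) \<in> ?S" for A B
      using generic_orbits_conj[OF that, of P Q] PQ unfolding min_max_dim by blast
    show "?S \<subseteq> anticomm_var ?n"
      using generic_orbits_subset[of "min s t" "max s t - min s t" 0] unfolding min_max_dim .
  qed
  then show ?thesis unfolding pair_in_Z_def Zpmr_min_max by (simp add: A B)
qed

lemma pair_in_Z_line:
  assumes "X0 \<in> carrier_mat s t" "X1 \<in> carrier_mat s t" "Y0 \<in> carrier_mat t s" "Y1 \<in> carrier_mat t s"
    and "\<forall>\<^sub>F z in cofinite. pair_in_Z s t a (X0 + z \<cdot>\<^sub>m X1) (Y0 + z \<cdot>\<^sub>m Y1)"
  shows "pair_in_Z s t a X0 Y0"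
proof -
  have "offdiag_mat s t (X0 + z \<cdot>\<^sub>m X1) (Y0 + z \<cdot>\<^sub>m Y1) = offdiag_mat s t X0 Y0 + z \<cdot>\<^sub>m offdiag_mat s t X1 Y1"
    and "sign_diag s t a + z \<cdot>\<^sub>m 0\<^sub>m (s+t) (s+t) = sign_diag s t a" for z
    using assms(1-4) unfolding offdiag_mat_def by (auto intro!: eq_matI)
  then have "\<forall>\<^sub>F z in cofinite. (sign_diag s t a + z \<cdot>\<^sub>m 0\<^sub>m (s+t) (s+t),
      offdiag_mat s t X0 Y0 + z \<cdot>\<^sub>m offdiag_mat s t X1 Y1)
      \<in> zariski_closure_in (s+t) (generic_orbits (min s t) (max s t - min s t) 0)"
    using assms(5) unfolding pair_in_Z_def Zpmr_min_max by simp
  then show ?thesis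
    unfolding pair_in_Z_def Zpmr_min_max
    by (rule zariski_closure_in_line[OF anticomm_var_sign_diag_offdiag[OF assms(1,3)] zero_carrier_mat
          offdiag_mat_carrier[OF assms(2,4)]])
qed

definition sign_ramp :: "nat \<Rightarrow> nat \<Rightarrow> complex mat" where
  "sign_ramp s t = mat_diag (s+t) (\<lambda>i. if i < s then of_nat (Suc i) else - of_nat (Suc (i - s)))"

lemma sign_ramp_carrier[simp]: "sign_ramp s t \<in> carrier_mat (s+t) (s+t)"
  unfolding sign_ramp_def by simp

lemma sign_diag_ramp_generic_orbits:
  assumes "\<forall>i<s+t. a + z * of_nat (Suc i) \<noteq> 0"
    and "\<forall>i<s+t. \<forall>j<s+t. i \<noteq> j \<longrightarrow> a + z * of_nat (Suc i) \<noteq> a + z * of_nat (Suc j) \<and>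
           a + z * of_nat (Suc i) \<noteq> - (a + z * of_nat (Suc j))"
  shows "(sign_diag s t a + z \<cdot>\<^sub>m sign_ramp s t, offdiag_mat s t (diag_rect_mat s t x) (diag_rect_mat t s y))
    \<in> generic_orbits (min s t) (max s t - min s t) 0"
proof -
  let ?n = "s + t" and ?p = "min s t" and ?m = "max s t - min s t"
  let ?B = "offdiag_mat s t (diag_rect_mat s t x) (diag_rect_mat t s y)"
  have B: "?B \<in> carrier_mat ?n ?n" unfolding diag_rect_mat_def by simp
  define \<beta> where "\<beta> = (\<lambda>j. a + z * of_nat (Suc j))"
  let ?d = "signed_blocks s \<beta>"
  have A: "sign_diag s t a + z \<cdot>\<^sub>m sign_ramp s t = mat_diag ?n ?d"
    unfolding sign_diag_def sign_ramp_def mat_diag_def signed_blocks_def \<beta>_def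
    by (intro eq_matI) (auto simp: algebra_simps)
  obtain P Q where PQ: "inverse_mats ?n P Q"
    "mat_diag ?n ?d = P * gen_diag ?p ?m 0 (\<lambda>j. if j < s then \<beta> j else - \<beta> j) * Q"
    using gen_diag_perm_similar by blast
  have "generic_params ?p ?m (\<lambda>j. if j < s then \<beta> j else - \<beta> j)"
    by (rule generic_params_signed[of _ _ ?n]) (use assms in \<open>auto simp: \<beta>_def\<close>)
  moreover have "(?d i + ?d j) * ?B $$ (i,j) = 0" if "i < ?n" "j < ?n" for i j
    using that by (auto simp: index_offdiag_mat diag_rect_mat_def signed_blocks_def)
  then have "(mat_diag ?n ?d, ?B) \<in> anticomm_var ?n"
    using B by (simp add: anticomm_var_def anticomm_mat_diag_iff[OF B])
  ultimately show ?thesis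
    unfolding A using generic_orbits_memI[of ?p ?m _ 0, unfolded min_max_dim] PQ by blast
qed

lemma pair_in_Z_diag: "pair_in_Z s t a (diag_rect_mat s t x) (diag_rect_mat t s y)"
proof -
  let ?n = "s + t" and ?S = "generic_orbits (min s t) (max s t - min s t) 0"
  let ?B = "offdiag_mat s t (diag_rect_mat s t x) (diag_rect_mat t s y)"
  have XY: "diag_rect_mat s t x \<in> carrier_mat s t" "diag_rect_mat t s y \<in> carrier_mat t s"
    unfolding diag_rect_mat_def by auto
  have "\<forall>\<^sub>F z in cofinite. (sign_diag s t a + z \<cdot>\<^sub>m sign_ramp s t, ?B + z \<cdot>\<^sub>m 0\<^sub>m ?n ?n)
      \<in> zariski_closure_in ?n ?S"
    using eventually_generic_shift[of ?n a]
  proof eventually_elim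
    case (elim z)
    have "?B + z \<cdot>\<^sub>m 0\<^sub>m ?n ?n = ?B" using XY by simp
    then show ?case
      using sign_diag_ramp_generic_orbits[of s t a z x y] elim
        subset_zariski_closure_in[OF generic_orbits_subset, of "min s t" "max s t - min s t" 0]
      unfolding min_max_dim by auto
  qed
  then have "(sign_diag s t a, ?B) \<in> zariski_closure_in ?n ?S"
    by (rule zariski_closure_in_line[OF anticomm_var_sign_diag_offdiag[OF XY] sign_ramp_carrier
          zero_carrier_mat])
  then show ?thesis unfolding pair_in_Z_def Zpmr_min_max .
qed

lemma pair_in_Z_all:
  assumes X: "X \<in> carrier_mat s t" and Y: "Y \<in> carrier_mat t s"
  shows "pair_in_Z s t a X Y"
proof (cases "t \<le> s")
  case True
  then obtain u where s: "s = t + u" using le_Suc_ex by blast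
  interpret line_closed_invariant_pred t u "pair_in_Z (t+u) t a"
  proof
    show "pair_in_Z (t+u) t a (G * X * H') (H * Y * G')"
      if "X \<in> carrier_mat (t+u) t" "Y \<in> carrier_mat t (t+u)" "inverse_mats (t+u) G G'"
        "inverse_mats t H H'" "pair_in_Z (t+u) t a X Y" for X Y G G' H H'
      using pair_in_Z_conj that by blast
    show "pair_in_Z (t+u) t a (diag_rect_mat (t+u) t x) (diag_rect_mat t (t+u) y)" for x y
      by (rule pair_in_Z_diag)
    show "pair_in_Z (t+u) t a X0 Y0"
      if "X0 \<in> carrier_mat (t+u) t" "X1 \<in> carrier_mat (t+u) t" "Y0 \<in> carrier_mat t (t+u)"
        "Y1 \<in> carrier_mat t (t+u)" "\<forall>\<^sub>F z in cofinite. pair_in_Z (t+u) t a (X0 + z \<cdot>\<^sub>m X1) (Y0 + z \<cdot>\<^sub>m Y1)"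
      for X0 X1 Y0 Y1
      using pair_in_Z_line that by blast
  qed
  show ?thesis using all_pairs X Y unfolding s by blast
next
  case False
  then obtain u where t: "t = s + u" using le_Suc_ex[of s t] by auto
  interpret line_closed_invariant_pred s u "\<lambda>Y X. pair_in_Z s (s+u) a X Y"
  proof
    show "pair_in_Z s (s+u) a (H * Y * G') (G * X * H')"
      if "X \<in> carrier_mat (s+u) s" "Y \<in> carrier_mat s (s+u)" "inverse_mats (s+u) G G'"
        "inverse_mats s H H'" "pair_in_Z s (s+u) a Y X" for X Y G G' H H'
      using pair_in_Z_conj that by blast
    show "pair_in_Z s (s+u) a (diag_rect_mat s (s+u) y) (diag_rect_mat (s+u) s x)" for x y
      by (rule pair_in_Z_diag)
    show "pair_in_Z s (s+u) a Y0 X0"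
      if "X0 \<in> carrier_mat (s+u) s" "X1 \<in> carrier_mat (s+u) s" "Y0 \<in> carrier_mat s (s+u)"
        "Y1 \<in> carrier_mat s (s+u)" "\<forall>\<^sub>F z in cofinite. pair_in_Z s (s+u) a (Y0 + z \<cdot>\<^sub>m Y1) (X0 + z \<cdot>\<^sub>m X1)"
      for X0 X1 Y0 Y1
      using pair_in_Z_line that by blast
  qed
  show ?thesis using all_pairs X Y unfolding t by blast
qed

lemma rank_offdiag_mat:
  fixes X Y :: "'a :: field mat"
  assumes X: "X \<in> carrier_mat s t" and Y: "Y \<in> carrier_mat t s"
  shows "vec_space.rank (s+t) (offdiag_mat s t X Y) \<le> 2 * min s t"
proof -
  let ?n = "s + t" and ?top = "offdiag_mat s t X (0\<^sub>m t s)" and ?bot = "offdiag_mat s t (0\<^sub>m s t) Y"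
  have c: "?top \<in> carrier_mat ?n ?n" "?bot \<in> carrier_mat ?n ?n" using X Y by auto
  have "offdiag_mat s t X Y = ?top + ?bot"
    using X Y unfolding offdiag_mat_def by (intro eq_matI) auto
  then have "vec_space.rank ?n (offdiag_mat s t X Y) \<le> vec_space.rank ?n ?top + vec_space.rank ?n ?bot"
    using vec_space.rank_subadditive[OF c] by simp
  moreover have "vec_space.rank ?n ?top \<le> card {0..<s}"
    by (rule rank_le_card_nonzero_rows[OF _ c(1)]) (use X in \<open>auto simp: index_offdiag_mat\<close>)
  moreover have "vec_space.rank ?n ?top \<le> card {s..<?n}"
    by (rule rank_le_card_nonzero_cols[OF _ c(1)]) (use X in \<open>auto simp: index_offdiag_mat\<close>)
  moreover have "vec_space.rank ?n ?bot \<le> card {s..<?n}"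
    by (rule rank_le_card_nonzero_rows[OF _ c(2)]) (use Y in \<open>auto simp: index_offdiag_mat\<close>)
  moreover have "vec_space.rank ?n ?bot \<le> card {0..<s}"
    by (rule rank_le_card_nonzero_cols[OF _ c(2)]) (use Y in \<open>auto simp: index_offdiag_mat\<close>)
  ultimately show ?thesis by simp
qed

theorem lemma4p1:
  fixes a :: complex and s t n :: nat and A B :: "complex mat"
  assumes "a \<noteq> 0"
    and "n = s + t" and "n \<ge> 1"
    and "A = mat n n (\<lambda>(i,j). if i = j then (if i < s then a else - a) else 0)"
    and "B \<in> carrier_mat n n"
    and "A * B + B * A = 0\<^sub>m n n"
  shows "vec_space.rank n B \<le> 2 * min s t \<and>
         (A, B) \<in> Zpmr (min s t) (max s t - min s t) 0"
proof -
  have A: "A = sign_diag s t a"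
    unfolding assms(4) assms(2) sign_diag_def mat_diag_def by (intro eq_matI) auto
  obtain X Y where XY: "X \<in> carrier_mat s t" "Y \<in> carrier_mat t s" "B = offdiag_mat s t X Y"
    using offdiag_if_anticomm_sign_diag[OF assms(1)] assms(2,5,6) A by blast
  have "vec_space.rank n B \<le> 2 * min s t"
    using rank_offdiag_mat[OF XY(1,2)] XY(3) assms(2) by simp
  moreover have "(A, B) \<in> Zpmr (min s t) (max s t - min s t) 0"
    using pair_in_Z_all[OF XY(1,2), of a] unfolding pair_in_Z_def A XY(3) .
  ultimately show ?thesis by simp
qed

end
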